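(* Let $G$ be a locally free group, $D$ a finitely generated subgroup of $G$ with $\mu_{G}(D)=m$, and $M$ a subgroup of $G$ such that $D\subseteq M$ and $r(M)=m$. For $g\in G\setminus M$, let $M_g=M\langle g\rangle$ be the subgroup of $G$ generated by $g$ and the elements of $M$, and let $r(M_g)=n$. If $n>m$, then $n=m+1$ and there exists a free subgroup $F_m$ of rank $m$ in $M$ such that $D\subseteq F_m$ and the subgroup $F_m\langle g\rangle$ generated by $F_m$ and $g$ is isomorphic to the free product $F_m*\langle g\rangle$.
   Context: A group is locally free if all of its finitely generated subgroups are free. For a finitely generated subgroup $H$ of a locally free group $G$, $\mu_G(H)$ is the least positive integer $m$ such that $H\subseteq F$ for some free subgroup $F$ of $G$ of rank $m$. The rank $r(G)$ of a locally free group $G$ is the maximum of $\{\mu_G(H) : H \text{ a finitely generated subgroup of } G\}$ if this maximum exists, and $r(G)=\infty$ otherwise (subgroups of $G$ are locally free, so $\mu$ and $r$ apply to them as well). *)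

theory Defs
  imports "HOL-Algebra.Algebra" "HOL-Library.Extended_Nat"
begin

text \<open>Group words over an alphabet of elements: a letter (True, x) stands for x,
  a letter (False, x) stands for the inverse of x.\<close>

definition letter_val :: "('a, 'b) monoid_scheme \<Rightarrow> bool \<times> 'a \<Rightarrow> 'a" where
  "letter_val G l = (if fst l then snd l else inv\<^bsub>G\<^esub> (snd l))"

fun word_val :: "('a, 'b) monoid_scheme \<Rightarrow> (bool \<times> 'a) list \<Rightarrow> 'a" where
  "word_val G [] = \<one>\<^bsub>G\<^esub>"
| "word_val G (l # w) = letter_val G l \<otimes>\<^bsub>G\<^esub> word_val G w"

fun reduced_word :: "(bool \<times> 'a) list \<Rightarrow> bool" where
  "reduced_word [] = True"
| "reduced_word [l] = True"
| "reduced_word (l1 # l2 # w) =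
     (\<not> (snd l1 = snd l2 \<and> fst l1 \<noteq> fst l2) \<and> reduced_word (l2 # w))"

definition free_basis :: "('a, 'b) monoid_scheme \<Rightarrow> 'a set \<Rightarrow> bool" where
  "free_basis G B \<longleftrightarrow> B \<subseteq> carrier G \<and>
     (\<forall>w. w \<noteq> [] \<and> reduced_word w \<and> snd ` set w \<subseteq> B \<longrightarrow> word_val G w \<noteq> \<one>\<^bsub>G\<^esub>)"

definition free_subgroup_rank :: "('a, 'b) monoid_scheme \<Rightarrow> 'a set \<Rightarrow> nat \<Rightarrow> bool" where
  "free_subgroup_rank G F m \<longleftrightarrow>
     (\<exists>B. finite B \<and> card B = m \<and> free_basis G B \<and> generate G B = F)"

definition fin_gen_subgroup :: "('a, 'b) monoid_scheme \<Rightarrow> 'a set \<Rightarrow> bool" where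
  "fin_gen_subgroup G H \<longleftrightarrow> (\<exists>S. finite S \<and> S \<subseteq> carrier G \<and> H = generate G S)"

definition locally_free :: "('a, 'b) monoid_scheme \<Rightarrow> bool" where
  "locally_free G \<longleftrightarrow> group G \<and>
     (\<forall>H. fin_gen_subgroup G H \<longrightarrow> (\<exists>m. free_subgroup_rank G H m))"

text \<open>mu_in G M H: for a subgroup M of G (itself locally free) and a finitely generated
  subgroup H of M, the least positive m such that H lies in a free subgroup of M of rank m.
  mu_G(H) is mu_in G (carrier G) H.\<close>
definition mu_in :: "('a, 'b) monoid_scheme \<Rightarrow> 'a set \<Rightarrow> 'a set \<Rightarrow> nat" where
  "mu_in G M H = (LEAST m. 0 < m \<and> (\<exists>F. F \<subseteq> M \<and> free_subgroup_rank G F m \<and> H \<subseteq> F))"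

definition rank_lf :: "('a, 'b) monoid_scheme \<Rightarrow> 'a set \<Rightarrow> enat" where
  "rank_lf G M = Sup {enat (mu_in G M H) | H. fin_gen_subgroup G H \<and> H \<subseteq> M}"

text \<open>The subgroup generated by subgroups A and B is (canonically) their free product:
  no nonempty alternating product of nontrivial elements of A and B is trivial.\<close>
fun alternating :: "(bool \<times> 'a) list \<Rightarrow> bool" where
  "alternating [] = True"
| "alternating [l] = True"
| "alternating (l1 # l2 # w) = (fst l1 \<noteq> fst l2 \<and> alternating (l2 # w))"

definition internal_free_product :: "('a, 'b) monoid_scheme \<Rightarrow> 'a set \<Rightarrow> 'a set \<Rightarrow> bool" where
  "internal_free_product G A B \<longleftrightarrow> subgroup A G \<and> subgroup B G \<and>
     (\<forall>w. w \<noteq> [] \<and> alternating w \<and>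
          (\<forall>l\<in>set w. snd l \<noteq> \<one>\<^bsub>G\<^esub> \<and> (if fst l then snd l \<in> A else snd l \<in> B))
        \<longrightarrow> foldr (\<lambda>l x. snd l \<otimes>\<^bsub>G\<^esub> x) w \<one>\<^bsub>G\<^esub> \<noteq> \<one>\<^bsub>G\<^esub>)"

end

theory Submission
  imports Defs
begin

text \<open>A finitely generated \<open>H \<le> M\<langle>g\<rangle>\<close> only involves finitely many elements of M. These, together
  with D and a nontrivial element of M, lie in a free subgroup \<open>F \<le> M\<close> whose rank is exactly m:
  at most \<open>r(M) = m\<close>, at least \<open>\<mu>\<^sub>G(D) = m\<close>. So \<open>H \<le> F\<langle>g\<rangle>\<close>, a subgroup generated by m + 1 elements,
  and \<open>r(M\<langle>g\<rangle>) \<le> m + 1\<close>. If \<open>r(M\<langle>g\<rangle>) > m\<close>, some \<open>F\<langle>g\<rangle>\<close> is free of rank m + 1 and generated by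
  the m + 1 elements \<open>B \<union> {g}\<close>, B a basis of F. Finitely generated free groups are Hopfian, so
  \<open>B \<union> {g}\<close> is a free basis, which makes \<open>F\<langle>g\<rangle>\<close> the free product \<open>F * \<langle>g\<rangle>\<close>. The Hopf property is
  obtained by counting homomorphisms into finite symmetric groups, which detect every nontrivial
  element of a free group.\<close>

lemma letter_val_closed:
  "group G \<Longrightarrow> snd l \<in> carrier G \<Longrightarrow> letter_val G l \<in> carrier G"
  by (auto simp: letter_val_def group.inv_closed)

lemma word_val_closed:
  "group G \<Longrightarrow> snd ` set w \<subseteq> carrier G \<Longrightarrow> word_val G w \<in> carrier G"
  by (induction w) (auto simp: letter_val_closed group.is_monoid monoid.m_closed)

lemma word_val_append:
  assumes G: "group G" and "snd ` set u \<subseteq> carrier G" "snd ` set v \<subseteq> carrier G"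
  shows "word_val G (u @ v) = word_val G u \<otimes>\<^bsub>G\<^esub> word_val G v"
  using assms(2)
proof (induction u)
  case Nil
  then show ?case using word_val_closed[OF G assms(3)] by (simp add: group.is_monoid monoid.l_one G)
next
  case (Cons l u)
  then show ?case
    using word_val_closed[OF G, of u] word_val_closed[OF G assms(3)] letter_val_closed[OF G, of l]
    by (simp add: monoid.m_assoc group.is_monoid G)
qed

lemma word_val_in_subgroup:
  assumes "subgroup K G" shows "snd ` set w \<subseteq> K \<Longrightarrow> word_val G w \<in> K"
  by (induction w) (auto simp: letter_val_def subgroup.one_closed subgroup.m_closed
      subgroup.m_inv_closed assms)

lemma generate_eq_word_vals:
  assumes G: "group G" and S: "S \<subseteq> carrier G"
  shows "generate G S = {x. \<exists>w. x = word_val G w \<and> snd ` set w \<subseteq> S}"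
proof
  show "generate G S \<subseteq> {x. \<exists>w. x = word_val G w \<and> snd ` set w \<subseteq> S}"
  proof
    fix x assume "x \<in> generate G S"
    then show "x \<in> {x. \<exists>w. x = word_val G w \<and> snd ` set w \<subseteq> S}"
    proof induction
      case one
      show ?case by (intro CollectI exI[of _ "[]"]) simp
    next
      case (incl h)
      then show ?case using S G
        by (intro CollectI exI[of _ "[(True, h)]"])
          (auto simp: letter_val_def group.is_monoid monoid.r_one)
    next
      case (inv h)
      then show ?case using S G
        by (intro CollectI exI[of _ "[(False, h)]"])
          (auto simp: letter_val_def group.is_monoid monoid.r_one group.inv_closed)
    next
      case (eng h1 h2)
      then obtain w1 w2 where "h1 = word_val G w1" "snd ` set w1 \<subseteq> S"
          "h2 = word_val G w2" "snd ` set w2 \<subseteq> S"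
        by blast
      then show ?case using S word_val_append[OF G, of w1 w2]
        by (intro CollectI exI[of _ "w1 @ w2"]) auto
    qed
  qed
  show "{x. \<exists>w. x = word_val G w \<and> snd ` set w \<subseteq> S} \<subseteq> generate G S"
    using word_val_in_subgroup[OF group.generate_is_subgroup[OF G S]] generate.incl[of _ S G]
    by blast
qed

definition inv_word :: "(bool \<times> 'a) list \<Rightarrow> (bool \<times> 'a) list" where
  "inv_word w = rev (map (\<lambda>(s, x). (\<not> s, x)) w)"

lemma inv_word_simps [simp]: "inv_word [] = []" "inv_word ((s, x) # w) = inv_word w @ [(\<not> s, x)]"
  by (simp_all add: inv_word_def)

lemma snd_set_inv_word [simp]: "snd ` set (inv_word w) = snd ` set w"
  by (force simp: inv_word_def)

lemma snd_image_apsnd [simp]: "snd ` apsnd f ` A = f ` snd ` A"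
  by (simp add: image_image)

lemma snd_set_map_apsnd_subset:
  "snd ` set w \<subseteq> C \<Longrightarrow> f ` C \<subseteq> A \<Longrightarrow> snd ` set (map (apsnd f) w) \<subseteq> A"
  unfolding set_map snd_image_apsnd by (meson image_mono order_trans)

lemma map_apsnd_inv_word: "map (apsnd f) (inv_word w) = inv_word (map (apsnd f) w)"
  by (induction w) (auto simp: apsnd_def)

lemma word_val_inv_word:
  assumes G: "group G"
  shows "snd ` set w \<subseteq> carrier G \<Longrightarrow> word_val G (inv_word w) = inv\<^bsub>G\<^esub> (word_val G w)"
proof (induction w)
  case Nil
  then show ?case using G by (simp add: group.is_monoid monoid.inv_one)
next
  case (Cons l w)
  obtain s x where l: "l = (s, x)" by fastforce
  have x: "x \<in> carrier G" and w: "snd ` set w \<subseteq> carrier G" using Cons(2) l by auto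
  interpret group G by fact
  have "word_val G (inv_word (l # w)) = inv\<^bsub>G\<^esub> (word_val G w) \<otimes>\<^bsub>G\<^esub> letter_val G (\<not> s, x)"
    using word_val_append[OF G, of "inv_word w" "[(\<not> s, x)]"] Cons(1)[OF w] x w l
      letter_val_closed[OF G, of "(\<not> s, x)"] by simp
  also have "\<dots> = inv\<^bsub>G\<^esub> (letter_val G l \<otimes>\<^bsub>G\<^esub> word_val G w)"
    using x l word_val_closed[OF G w] by (cases s) (auto simp: letter_val_def inv_mult_group)
  finally show ?case by simp
qed

section \<open>Free reduction\<close>

definition cancel_step :: "(bool \<times> 'a) list \<Rightarrow> (bool \<times> 'a) list \<Rightarrow> bool" where
  "cancel_step w w' \<longleftrightarrow>
     (\<exists>u x s v. w = u @ (s, x) # (\<not> s, x) # v \<and> w' = u @ v)"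

lemma cancel_steps_set_subset: "cancel_step\<^sup>*\<^sup>* w w' \<Longrightarrow> set w' \<subseteq> set w"
  by (induction rule: rtranclp_induct) (auto simp: cancel_step_def)

lemma cancel_steps_map_apsnd:
  "cancel_step\<^sup>*\<^sup>* w w' \<Longrightarrow> cancel_step\<^sup>*\<^sup>* (map (apsnd f) w) (map (apsnd f) w')"
proof (induction rule: rtranclp_induct)
  case (step w' w'')
  then have "cancel_step (map (apsnd f) w') (map (apsnd f) w'')"
    by (fastforce simp: cancel_step_def apsnd_def)
  with step.IH show ?case by simp
qed simp

lemma word_val_cancel_step:
  assumes G: "group G" and "cancel_step w w'" "snd ` set w \<subseteq> carrier G"
  shows "word_val G w = word_val G w'"
proof -
  obtain u x s v where w: "w = u @ (s, x) # (\<not> s, x) # v" "w' = u @ v"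
    using assms(2) by (auto simp: cancel_step_def)
  have u: "snd ` set u \<subseteq> carrier G" and v: "snd ` set v \<subseteq> carrier G" and x: "x \<in> carrier G"
    using assms(3) w(1) by auto
  interpret group G by fact
  have "letter_val G (s, x) \<otimes>\<^bsub>G\<^esub> (letter_val G (\<not> s, x) \<otimes>\<^bsub>G\<^esub> word_val G v) = word_val G v"
    using x word_val_closed[OF G v] by (cases s) (auto simp: letter_val_def m_assoc[symmetric])
  then show ?thesis
    using w u v x word_val_append[OF G u, of "(s, x) # (\<not> s, x) # v"] word_val_append[OF G u v]
    by simp
qed

lemma word_val_cancel_steps:
  assumes G: "group G" and "cancel_step\<^sup>*\<^sup>* w w'" "snd ` set w \<subseteq> carrier G"
  shows "word_val G w = word_val G w'"
  using assms(2)
proof (induction rule: rtranclp_induct)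
  case (step w' w'')
  then show ?case
    using word_val_cancel_step[OF G step(2)] cancel_steps_set_subset[OF step(1)] assms(3) by auto
qed simp

lemma not_reduced_word_cancel_step: "\<not> reduced_word w \<Longrightarrow> \<exists>w'. cancel_step w w'"
proof (induction w rule: reduced_word.induct)
  case (3 l1 l2 w)
  show ?case
  proof (cases "snd l1 = snd l2 \<and> fst l1 \<noteq> fst l2")
    case True
    then obtain s x where "l1 = (s, x)" "l2 = (\<not> s, x)" by (cases l1; cases l2) auto
    then have "cancel_step (l1 # l2 # w) w"
      unfolding cancel_step_def by (intro exI[of _ "[]"] exI[of _ x] exI[of _ s] exI[of _ w]) simp
    then show ?thesis ..
  next
    case False
    with 3 obtain w' where "cancel_step (l2 # w) w'" by auto
    then obtain u x s v where "l2 # w = u @ (s, x) # (\<not> s, x) # v" "w' = u @ v"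
      by (auto simp: cancel_step_def)
    then have "cancel_step (l1 # l2 # w) (l1 # w')"
      unfolding cancel_step_def
      by (intro exI[of _ "l1 # u"] exI[of _ x] exI[of _ s] exI[of _ v]) simp
    then show ?thesis ..
  qed
qed auto

lemma exists_reduced_word_cancel_steps: "\<exists>r. reduced_word r \<and> cancel_step\<^sup>*\<^sup>* w r"
proof (induction w rule: length_induct)
  case (1 w)
  show ?case
  proof (cases "reduced_word w")
    case False
    then obtain w' where step: "cancel_step w w'" using not_reduced_word_cancel_step by blast
    then have "length w' < length w" by (auto simp: cancel_step_def)
    with 1 obtain r where "reduced_word r" "cancel_step\<^sup>*\<^sup>* w' r" by blast
    with step show ?thesis by (meson converse_rtranclp_into_rtranclp)
  qed blast
qed

lemma nontrivial_eq_reduced_word_val: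
  assumes G: "group G" and S: "S \<subseteq> carrier G" and x: "x \<in> generate G S" "x \<noteq> \<one>\<^bsub>G\<^esub>"
  obtains u where "u \<noteq> []" "reduced_word u" "snd ` set u \<subseteq> S" "word_val G u = x"
proof -
  obtain w where w: "x = word_val G w" "snd ` set w \<subseteq> S" using x generate_eq_word_vals[OF G S]
    by auto
  obtain r where r: "reduced_word r" "cancel_step\<^sup>*\<^sup>* w r" using exists_reduced_word_cancel_steps
    by blast
  have "word_val G r = x" using word_val_cancel_steps[OF G r(2)] w S by auto
  moreover have "snd ` set r \<subseteq> S" using cancel_steps_set_subset[OF r(2)] w by auto
  moreover from calculation have "r \<noteq> []" using x(2) by auto
  ultimately show ?thesis using r(1) that by blast
qed

text \<open>The reduced form of a relator over a free basis is empty.\<close>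

lemma free_basis_word_val_eq_one:
  assumes G: "group G" and Q: "group Q" and C: "free_basis G C" "f ` C \<subseteq> carrier Q"
    and w: "snd ` set w \<subseteq> C" "word_val G w = \<one>\<^bsub>G\<^esub>"
  shows "word_val Q (map (apsnd f) w) = \<one>\<^bsub>Q\<^esub>"
proof -
  obtain r where r: "reduced_word r" "cancel_step\<^sup>*\<^sup>* w r" using exists_reduced_word_cancel_steps
    by blast
  have "C \<subseteq> carrier G" using C by (simp add: free_basis_def)
  then have "word_val G r = \<one>\<^bsub>G\<^esub>" using word_val_cancel_steps[OF G r(2)] w by auto
  moreover have "snd ` set r \<subseteq> C" using cancel_steps_set_subset[OF r(2)] w by auto
  ultimately have "r = []" using C r(1) unfolding free_basis_def by blast
  moreover have "snd ` set (map (apsnd f) w) \<subseteq> carrier Q"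
    using snd_set_map_apsnd_subset w(1) C(2) .
  ultimately show ?thesis
    using word_val_cancel_steps[OF Q cancel_steps_map_apsnd[OF r(2)]] by simp
qed

lemma free_basis_word_val_eq:
  assumes G: "group G" and Q: "group Q" and C: "free_basis G C" "f ` C \<subseteq> carrier Q"
    and w: "snd ` set w1 \<subseteq> C" "snd ` set w2 \<subseteq> C" "word_val G w1 = word_val G w2"
  shows "word_val Q (map (apsnd f) w1) = word_val Q (map (apsnd f) w2)"
proof -
  have "C \<subseteq> carrier G" using C by (simp add: free_basis_def)
  then have one: "word_val G (w1 @ inv_word w2) = \<one>\<^bsub>G\<^esub>"
    using w word_val_append[OF G, of w1 "inv_word w2"] word_val_inv_word[OF G, of w2]
      word_val_closed[OF G, of w1] by (auto simp: group.r_inv[OF G])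
  have "word_val Q (map (apsnd f) (w1 @ inv_word w2)) = \<one>\<^bsub>Q\<^esub>"
    by (rule free_basis_word_val_eq_one[OF G Q C _ one]) (use w in \<open>simp add: image_Un\<close>)
  moreover have w': "snd ` set (map (apsnd f) w1) \<subseteq> carrier Q"
    "snd ` set (map (apsnd f) w2) \<subseteq> carrier Q"
    using snd_set_map_apsnd_subset[OF w(1) C(2)] snd_set_map_apsnd_subset[OF w(2) C(2)] .
  ultimately have "word_val Q (map (apsnd f) w1) \<otimes>\<^bsub>Q\<^esub> inv\<^bsub>Q\<^esub> word_val Q (map (apsnd f) w2) = \<one>\<^bsub>Q\<^esub>"
    using word_val_append[OF Q w'(1), of "inv_word (map (apsnd f) w2)"]
      word_val_inv_word[OF Q w'(2)]
    by (simp add: map_apsnd_inv_word)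
  then show ?thesis
    using word_val_closed[OF Q w'(1)] word_val_closed[OF Q w'(2)]
    by (simp add: group.inv_solve_right'[OF Q] group.is_monoid[OF Q] monoid.l_one)
qed

lemma hom_word_val:
  assumes G: "group G" and Q: "group Q" and h: "h \<in> hom G Q"
  shows "snd ` set w \<subseteq> carrier G \<Longrightarrow> h (word_val G w) = word_val Q (map (apsnd h) w)"
proof (induction w)
  case Nil
  then show ?case using group_hom.hom_one[of G Q h] G Q h
    by (simp add: group_hom_def group_hom_axioms_def)
next
  case (Cons l w)
  interpret group_hom G Q h using G Q h by (simp add: group_hom_def group_hom_axioms_def)
  have "h (letter_val G l) = letter_val Q (apsnd h l)"
    using Cons(2) by (cases l) (auto simp: letter_val_def)
  then show ?case
    using Cons letter_val_closed[OF G, of l] word_val_closed[OF G, of w] by simp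
qed

lemma word_val_subgroup_generated:
  assumes G: "group G"
  shows "snd ` set w \<subseteq> carrier (subgroup_generated G S) \<Longrightarrow>
    word_val (subgroup_generated G S) w = word_val G w"
  by (induction w) (auto simp: letter_val_def group.inv_subgroup_generated[OF G])

lemma hom_subgroup_generated_word_val:
  assumes G: "group G" and Q: "group Q" and S: "S \<subseteq> carrier G"
    and h: "h \<in> hom (subgroup_generated G S) Q" and w: "snd ` set w \<subseteq> S"
  shows "h (word_val G w) = word_val Q (map (apsnd h) w)"
proof -
  have "snd ` set w \<subseteq> carrier (subgroup_generated G S)"
    using w S by (auto simp: carrier_subgroup_generated intro: generate.incl)
  then show ?thesis
    using hom_word_val[OF group.group_subgroup_generated[OF G] Q h]
      word_val_subgroup_generated[OF G]
    by simp
qed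

lemma hom_subgroup_generated_eqI:
  assumes G: "group G" and Q: "group Q" and S: "S \<subseteq> carrier G"
    and h: "h1 \<in> hom (subgroup_generated G S) Q" "h2 \<in> hom (subgroup_generated G S) Q"
    and eq: "\<And>s. s \<in> S \<Longrightarrow> h1 s = h2 s" and x: "x \<in> generate G S"
  shows "h1 x = h2 x"
proof -
  obtain w where w: "x = word_val G w" "snd ` set w \<subseteq> S" using x generate_eq_word_vals[OF G S]
    by auto
  then have "map (apsnd h1) w = map (apsnd h2) w" using eq by (auto simp: apsnd_def)
  then show ?thesis using w hom_subgroup_generated_word_val[OF G Q S] h by metis
qed

lemma free_basis_word_map:
  assumes G: "group G" and Q: "group Q" and C: "free_basis G C" and f: "f ` C \<subseteq> carrier Q"
  shows "\<exists>h. \<forall>w. snd ` set w \<subseteq> C \<longrightarrow> h (word_val G w) = word_val Q (map (apsnd f) w)"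
proof -
  define rep where "rep x = (SOME w. snd ` set w \<subseteq> C \<and> word_val G w = x)" for x
  have "word_val Q (map (apsnd f) (rep (word_val G w))) = word_val Q (map (apsnd f) w)"
    if w: "snd ` set w \<subseteq> C" for w
  proof -
    have "\<exists>v. snd ` set v \<subseteq> C \<and> word_val G v = word_val G w" using w by blast
    then have "snd ` set (rep (word_val G w)) \<subseteq> C \<and> word_val G (rep (word_val G w)) = word_val G w"
      unfolding rep_def by (rule someI_ex)
    then show ?thesis using free_basis_word_val_eq[OF G Q C f _ w] by blast
  qed
  then show ?thesis by (intro exI[of _ "\<lambda>x. word_val Q (map (apsnd f) (rep x))"]) blast
qed

lemma free_basis_hom_extension:
  assumes G: "group G" and Q: "group Q" and C: "free_basis G C" and f: "f ` C \<subseteq> carrier Q"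
  obtains h where "h \<in> hom (subgroup_generated G C) Q" "\<And>c. c \<in> C \<Longrightarrow> h c = f c"
proof -
  have Cc: "C \<subseteq> carrier G" using C by (simp add: free_basis_def)
  have words: "carrier (subgroup_generated G C) = {x. \<exists>w. x = word_val G w \<and> snd ` set w \<subseteq> C}"
    using generate_eq_word_vals[OF G Cc] Cc by (simp add: carrier_subgroup_generated Int_absorb1)
  from free_basis_word_map[OF G Q C f] obtain h
    where h: "\<And>w. snd ` set w \<subseteq> C \<Longrightarrow> h (word_val G w) = word_val Q (map (apsnd f) w)"
    by blast
  have fw: "snd ` set (map (apsnd f) w) \<subseteq> carrier Q" if "snd ` set w \<subseteq> C" for w
    using snd_set_map_apsnd_subset[OF that f] .
  have "h \<in> hom (subgroup_generated G C) Q"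
  proof (rule homI)
    fix x assume "x \<in> carrier (subgroup_generated G C)"
    then obtain w where "x = word_val G w" "snd ` set w \<subseteq> C" using words by auto
    then show "h x \<in> carrier Q" using h word_val_closed[OF Q fw] by simp
  next
    fix x y assume "x \<in> carrier (subgroup_generated G C)" "y \<in> carrier (subgroup_generated G C)"
    then obtain u v where uv: "x = word_val G u" "snd ` set u \<subseteq> C"
        "y = word_val G v" "snd ` set v \<subseteq> C"
      using words by auto
    then have "x \<otimes>\<^bsub>G\<^esub> y = word_val G (u @ v)" using word_val_append[OF G, of u v] Cc by auto
    then show "h (x \<otimes>\<^bsub>subgroup_generated G C\<^esub> y) = h x \<otimes>\<^bsub>Q\<^esub> h y"
      using uv h[of "u @ v"] h[OF uv(2)] h[OF uv(4)] word_val_append[OF Q fw fw]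
      by (simp add: image_Un)
  qed
  moreover have "h c = f c" if c: "c \<in> C" for c
  proof -
    have "c \<in> carrier G" "f c \<in> carrier Q" using c Cc f by auto
    then show ?thesis
      using h[of "[(True, c)]"] c by (simp add: letter_val_def group.is_monoid monoid.r_one G Q)
  qed
  ultimately show ?thesis using that by blast
qed

definition extendable_maps ::
    "('a, 'b) monoid_scheme \<Rightarrow> 'a set \<Rightarrow> ('c, 'd) monoid_scheme \<Rightarrow> ('a \<Rightarrow> 'c) set" where
  "extendable_maps G S Q =
     {f \<in> S \<rightarrow>\<^sub>E carrier Q. \<exists>h \<in> hom (subgroup_generated G S) Q. \<forall>s\<in>S. h s = f s}"

lemma finite_extendable_maps:
  "finite S \<Longrightarrow> finite (carrier Q) \<Longrightarrow> finite (extendable_maps G S Q)"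
  unfolding extendable_maps_def by (rule finite_subset[OF _ finite_PiE]) auto

lemma card_PiE_carrier: "finite S \<Longrightarrow> card (S \<rightarrow>\<^sub>E carrier Q) = card (carrier Q) ^ card S"
  by (simp add: card_PiE)

lemma card_extendable_maps_le:
  "finite S \<Longrightarrow> finite (carrier Q) \<Longrightarrow> card (extendable_maps G S Q) \<le> card (carrier Q) ^ card S"
  unfolding card_PiE_carrier[symmetric] extendable_maps_def by (intro card_mono finite_PiE) auto

text \<open>A free basis C of \<open>\<langle>S\<rangle>\<close> yields \<open>|Q|^|C|\<close> homomorphisms to Q, each determined by its
  values on S.\<close>

lemma card_extendable_maps_ge:
  assumes G: "group G" and Q: "group Q" "finite (carrier Q)"
    and C: "free_basis G C" "finite C" and S: "finite S" "S \<subseteq> carrier G"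
    and gen: "generate G C = generate G S"
  shows "card (carrier Q) ^ card C \<le> card (extendable_maps G S Q)"
proof -
  have Cc: "C \<subseteq> carrier G" using C by (simp add: free_basis_def)
  have same: "subgroup_generated G C = subgroup_generated G S"
    using gen Cc S(2) by (simp add: subgroup_generated_def Int_absorb1)
  define ext where "ext f = (SOME h. h \<in> hom (subgroup_generated G S) Q \<and> (\<forall>c\<in>C. h c = f c))" for f
  have ext: "ext f \<in> hom (subgroup_generated G S) Q" "\<forall>c\<in>C. ext f c = f c"
    if "f \<in> C \<rightarrow>\<^sub>E carrier Q" for f
  proof -
    have "f ` C \<subseteq> carrier Q" using that by auto
    then obtain h where "h \<in> hom (subgroup_generated G C) Q" "\<And>c. c \<in> C \<Longrightarrow> h c = f c"
      using free_basis_hom_extension[OF G Q(1) C(1)] by blast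
    then have "\<exists>h. h \<in> hom (subgroup_generated G S) Q \<and> (\<forall>c\<in>C. h c = f c)" using same by auto
    from someI_ex[OF this] show "ext f \<in> hom (subgroup_generated G S) Q" "\<forall>c\<in>C. ext f c = f c"
      unfolding ext_def by auto
  qed
  have SK: "S \<subseteq> carrier (subgroup_generated G S)"
    using S(2) by (auto simp: carrier_subgroup_generated intro: generate.incl)
  have "inj_on (\<lambda>f. restrict (ext f) S) (C \<rightarrow>\<^sub>E carrier Q)"
  proof (rule inj_onI)
    fix f1 f2 assume f: "f1 \<in> C \<rightarrow>\<^sub>E carrier Q" "f2 \<in> C \<rightarrow>\<^sub>E carrier Q"
      and eq: "restrict (ext f1) S = restrict (ext f2) S"
    have "ext f1 c = ext f2 c" if "c \<in> C" for c
    proof (rule hom_subgroup_generated_eqI[OF G Q(1) S(2) ext(1)[OF f(1)] ext(1)[OF f(2)]])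
      show "ext f1 s = ext f2 s" if "s \<in> S" for s using fun_cong[OF eq, of s] that by simp
      show "c \<in> generate G S" using \<open>c \<in> C\<close> gen by (auto intro: generate.incl)
    qed
    then show "f1 = f2" using ext(2)[OF f(1)] ext(2)[OF f(2)] by (intro PiE_ext[OF f]) auto
  qed
  moreover have "restrict (ext f) S \<in> extendable_maps G S Q" if f: "f \<in> C \<rightarrow>\<^sub>E carrier Q" for f
  proof -
    have "ext f \<in> carrier (subgroup_generated G S) \<rightarrow> carrier Q" using ext(1)[OF f]
      by (simp add: hom_def)
    then show ?thesis
      using ext(1)[OF f] SK unfolding extendable_maps_def by (auto intro!: bexI[of _ "ext f"])
  qed
  ultimately have "card (C \<rightarrow>\<^sub>E carrier Q) \<le> card (extendable_maps G S Q)"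
    by (intro card_inj_on_le finite_extendable_maps[OF S(1) Q(2)]) auto
  then show ?thesis using card_PiE_carrier[OF C(2), of Q] by simp
qed

lemma free_basis_card_le_generators:
  assumes G: "group G" and C: "free_basis G C" "finite C" and S: "finite S" "S \<subseteq> carrier G"
    and gen: "generate G C = generate G S"
  shows "card C \<le> card S"
proof -
  have Q: "group (sym_group 2)" "finite (carrier (sym_group 2))" "card (carrier (sym_group 2)) = 2"
    using sym_group_card_carrier[of 2] by (auto simp: sym_group_is_group intro: card_ge_0_finite)
  have "(2::nat) ^ card C \<le> card (extendable_maps G S (sym_group 2))"
    using card_extendable_maps_ge[OF G Q(1,2) C S gen] Q(3) by simp
  also have "\<dots> \<le> 2 ^ card S"
    using card_extendable_maps_le[OF S(1) Q(2)] Q(3) by simp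
  finally have "(2::nat) ^ card C \<le> 2 ^ card S" .
  then show ?thesis by simp
qed

lemma extendable_maps_eq_PiE:
  assumes G: "group G" and Q: "group Q" "finite (carrier Q)"
    and C: "free_basis G C" "finite C" and S: "finite S" "S \<subseteq> carrier G"
    and gen: "generate G C = generate G S" and card: "card C = card S"
  shows "extendable_maps G S Q = S \<rightarrow>\<^sub>E carrier Q"
proof (rule card_seteq)
  show "finite (S \<rightarrow>\<^sub>E carrier Q)" using S(1) Q(2) by (simp add: finite_PiE)
  show "extendable_maps G S Q \<subseteq> S \<rightarrow>\<^sub>E carrier Q" by (auto simp: extendable_maps_def)
  show "card (S \<rightarrow>\<^sub>E carrier Q) \<le> card (extendable_maps G S Q)"
    using card_extendable_maps_ge[OF G Q C S gen] card card_PiE_carrier[OF S(1), of Q] by simp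
qed

section \<open>Residual finiteness and the Hopf property\<close>

lemma reduced_word_nth_Suc:
  "reduced_word w \<Longrightarrow> Suc j < length w \<Longrightarrow> w ! Suc j \<noteq> (\<not> fst (w ! j), snd (w ! j))"
proof (induction w arbitrary: j rule: reduced_word.induct)
  case (3 l1 l2 w)
  then show ?case by (cases j) auto
qed auto

lemma inj_on_extends_to_permutation:
  assumes A: "finite A" and D: "D \<subseteq> A" "g ` D \<subseteq> A" and inj: "inj_on g D"
  shows "\<exists>p. p permutes A \<and> (\<forall>x\<in>D. p x = g x)"
proof -
  have "finite D" using A D(1) by (rule finite_subset[rotated])
  then have "card (A - D) = card (A - g ` D)"
    using A D inj by (simp add: card_Diff_subset card_image)
  then obtain h where h: "bij_betw h (A - D) (A - g ` D)"
    using finite_same_card_bij[OF finite_Diff[OF A] finite_Diff[OF A]] by blast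
  define p where "p x = (if x \<in> D then g x else if x \<in> A then h x else x)" for x
  have "bij_betw p D (g ` D)"
    by (rule bij_betw_cong[THEN iffD2, OF _ inj_on_imp_bij_betw[OF inj]]) (simp add: p_def)
  moreover have "bij_betw p (A - D) (A - g ` D)"
    by (rule bij_betw_cong[THEN iffD2, OF _ h]) (simp add: p_def)
  ultimately have "bij_betw p (D \<union> (A - D)) (g ` D \<union> (A - g ` D))"
    by (rule bij_betw_combine) blast
  then have "bij_betw p A A" using D by (simp add: Un_absorb1)
  moreover have "p x = x" if "x \<notin> A" for x using that D(1) by (auto simp: p_def)
  ultimately have "p permutes A" by (rule bij_imp_permutes)
  then show ?thesis by (auto simp: p_def)
qed

text \<open>Letter j of a reduced word w is sent to a permutation of {1..|w|+1} moving j+2 to j+1;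
  reducedness makes these requirements consistent for each generator, so the whole word moves
  |w|+1 to 1.\<close>

lemma reduced_word_letter_permutation:
  assumes red: "reduced_word w"
  shows "\<exists>p. p permutes {1..length w + 1} \<and>
    (\<forall>j<length w. w ! j = (True, x) \<longrightarrow> p (j + 2) = j + 1) \<and>
    (\<forall>j<length w. w ! j = (False, x) \<longrightarrow> p (j + 1) = j + 2)"
proof -
  define L where "L = length w"
  define T where "T = {j. j < L \<and> w ! j = (True, x)}"
  define F where "F = {j. j < L \<and> w ! j = (False, x)}"
  have F_Suc: "Suc a \<notin> T" if "a \<in> F" for a
  proof
    assume "Suc a \<in> T"
    then have "Suc a < length w" "w ! Suc a = (\<not> fst (w ! a), snd (w ! a))"
      using that by (simp_all add: T_def F_def L_def)
    then show False using reduced_word_nth_Suc[OF red] by blast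
  qed
  have T_Suc: "Suc b \<notin> F" if "b \<in> T" for b
  proof
    assume "Suc b \<in> F"
    then have "Suc b < length w" "w ! Suc b = (\<not> fst (w ! b), snd (w ! b))"
      using that by (simp_all add: T_def F_def L_def)
    then show False using reduced_word_nth_Suc[OF red] by blast
  qed
  define D where "D = (\<lambda>j. j + 2) ` T \<union> Suc ` F"
  define g where "g y = (if y \<in> (\<lambda>j. j + 2) ` T then y - 1 else y + 1)" for y
  have "inj_on g D" by (auto simp: inj_on_def D_def g_def dest: F_Suc T_Suc)
  moreover have "D \<subseteq> {1..L+1}" "g ` D \<subseteq> {1..L+1}" by (auto simp: D_def g_def T_def F_def)
  ultimately obtain p where p: "p permutes {1..L+1}" "\<forall>y\<in>D. p y = g y"
    using inj_on_extends_to_permutation[of "{1..L+1}" D g] by blast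
  have "p (j + 2) = j + 1" if "j \<in> T" for j
    using p(2) that by (auto simp: D_def g_def)
  moreover have "p (j + 1) = j + 2" if "j \<in> F" for j
    using p(2) that T_Suc by (auto simp: D_def g_def)
  ultimately show ?thesis using p(1) by (auto simp: T_def F_def L_def)
qed

lemma word_val_sym_group_drop_apply:
  assumes step: "\<And>j. j < length w \<Longrightarrow> letter_val (sym_group n) (apsnd f (w ! j)) (j + 2) = j + 1"
  shows "k \<le> length w \<Longrightarrow> word_val (sym_group n) (map (apsnd f) (drop k w)) (length w + 1) = k + 1"
proof (induction "length w - k" arbitrary: k)
  case 0
  then show ?case by (simp add: sym_group_one)
next
  case (Suc d)
  then have k: "k < length w" by simp
  have "drop k w = w ! k # drop (Suc k) w" using k by (simp add: Cons_nth_drop_Suc)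
  moreover have "word_val (sym_group n) (map (apsnd f) (drop (Suc k) w)) (length w + 1) = k + 2"
    using Suc k by simp
  ultimately show ?case using step[OF k] by (simp add: sym_group_mult)
qed

lemma reduced_word_nontrivial_in_sym_group:
  assumes red: "reduced_word w" and ne: "w \<noteq> []"
  shows "\<exists>n f. (\<forall>x. f x \<in> carrier (sym_group n)) \<and>
    word_val (sym_group n) (map (apsnd f) w) \<noteq> \<one>\<^bsub>sym_group n\<^esub>"
proof -
  define L where "L = length w"
  have "\<forall>x. \<exists>p. p permutes {1..L+1} \<and>
      (\<forall>j<L. w ! j = (True, x) \<longrightarrow> p (j + 2) = j + 1) \<and>
      (\<forall>j<L. w ! j = (False, x) \<longrightarrow> p (j + 1) = j + 2)"
    using reduced_word_letter_permutation[OF red] by (simp add: L_def)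
  from choice[OF this] obtain f where f: "\<And>x. f x permutes {1..L+1}"
    "\<And>x j. j < L \<Longrightarrow> w ! j = (True, x) \<Longrightarrow> f x (j + 2) = j + 1"
    "\<And>x j. j < L \<Longrightarrow> w ! j = (False, x) \<Longrightarrow> f x (j + 1) = j + 2"
    by blast
  let ?Q = "sym_group (L + 1)"
  have fQ: "f x \<in> carrier ?Q" for x using f(1) by (simp add: sym_group_carrier)
  have step: "letter_val ?Q (apsnd f (w ! j)) (j + 2) = j + 1" if j: "j < L" for j
  proof (cases "w ! j")
    case (Pair s x)
    show ?thesis
    proof (cases s)
      case True
      then show ?thesis using f(2)[OF j] Pair by (simp add: letter_val_def)
    next
      case False
      then have "f x (j + 1) = j + 2" using f(3)[OF j] Pair by simp
      then have "inv' (f x) (j + 2) = j + 1" using permutes_inverses(2)[OF f(1)] by metis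
      then show ?thesis using False Pair fQ by (simp add: letter_val_def)
    qed
  qed
  have "word_val ?Q (map (apsnd f) w) (L + 1) = 1"
    using word_val_sym_group_drop_apply[of w "L + 1" f 0] step by (simp add: L_def)
  moreover have "L \<noteq> 0" using ne by (simp add: L_def)
  ultimately have "word_val ?Q (map (apsnd f) w) \<noteq> \<one>\<^bsub>?Q\<^esub>" by (auto simp: sym_group_one)
  then show ?thesis using fQ by blast
qed

text \<open>A nontrivial reduced word over S survives in some finite symmetric group, and when
  \<open>|C| = |S|\<close> every assignment on S extends to a homomorphism.\<close>

lemma free_basis_of_card_eq:
  assumes G: "group G" and C: "free_basis G C" "finite C" and S: "finite S" "S \<subseteq> carrier G"
    and gen: "generate G C = generate G S" and card: "card C = card S"
  shows "free_basis G S"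
  unfolding free_basis_def
proof (intro conjI S(2) allI impI)
  fix w :: "(bool \<times> 'a) list"
  assume w: "w \<noteq> [] \<and> reduced_word w \<and> snd ` set w \<subseteq> S"
  have "reduced_word w" "w \<noteq> []" using w by auto
  from reduced_word_nontrivial_in_sym_group[OF this] obtain n f
    where f: "\<forall>x. f x \<in> carrier (sym_group n)"
      "word_val (sym_group n) (map (apsnd f) w) \<noteq> \<one>\<^bsub>sym_group n\<^esub>"
    by blast
  have Q: "group (sym_group n)" "finite (carrier (sym_group n))"
    using sym_group_card_carrier[of n] by (auto simp: sym_group_is_group intro: card_ge_0_finite)
  have "restrict f S \<in> S \<rightarrow>\<^sub>E carrier (sym_group n)" using f(1) by simp
  then have "restrict f S \<in> extendable_maps G S (sym_group n)"
    using extendable_maps_eq_PiE[OF G Q C S gen card] by simp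
  then obtain h where h: "h \<in> hom (subgroup_generated G S) (sym_group n)"
      "\<forall>s\<in>S. h s = restrict f S s"
    unfolding extendable_maps_def by blast
  have hf: "map (apsnd h) w = map (apsnd f) w"
  proof (rule map_cong[OF refl])
    fix l assume "l \<in> set w"
    then have "snd l \<in> S" using w by blast
    then show "apsnd h l = apsnd f l" using h(2) by (cases l) simp
  qed
  have "h (word_val G w) = word_val (sym_group n) (map (apsnd f) w)"
    unfolding hf[symmetric] using w
    by (intro hom_subgroup_generated_word_val[OF G Q(1) S(2) h(1)]) blast
  then have "h (word_val G w) \<noteq> \<one>\<^bsub>sym_group n\<^esub>" using f(2) by simp
  moreover have "h \<one>\<^bsub>G\<^esub> = \<one>\<^bsub>sym_group n\<^esub>"
    using hom_subgroup_generated_word_val[OF G Q(1) S(2) h(1), of "[]"] by simp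
  ultimately show "word_val G w \<noteq> \<one>\<^bsub>G\<^esub>" by auto
qed

section \<open>Free products\<close>

lemma reduced_word_Cons_iff:
  "reduced_word (l # v) \<longleftrightarrow>
    reduced_word v \<and> (v \<noteq> [] \<longrightarrow> \<not> (snd l = snd (hd v) \<and> fst l \<noteq> fst (hd v)))"
  by (cases v) auto

lemma reduced_word_append:
  "reduced_word u \<Longrightarrow> reduced_word v \<Longrightarrow> u \<noteq> [] \<Longrightarrow> v \<noteq> [] \<Longrightarrow> snd (last u) \<noteq> snd (hd v) \<Longrightarrow>
    reduced_word (u @ v)"
proof (induction u)
  case (Cons l u)
  then show ?case by (cases "u = []") (auto simp: reduced_word_Cons_iff)
qed simp

text \<open>Concatenate reduced words for the factors: consecutive factors use disjoint alphabets, so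
  no cancellation occurs at the junctions.\<close>

lemma alternating_product_reduced_word:
  assumes G: "group G" and B: "B \<subseteq> carrier G" "g \<in> carrier G" "g \<notin> B"
  shows "w \<noteq> [] \<Longrightarrow> alternating w \<Longrightarrow>
    (\<forall>l\<in>set w. snd l \<noteq> \<one>\<^bsub>G\<^esub> \<and> snd l \<in> generate G (if fst l then B else {g})) \<Longrightarrow>
    \<exists>W. W \<noteq> [] \<and> reduced_word W \<and> snd ` set W \<subseteq> insert g B \<and>
      word_val G W = foldr (\<lambda>l x. snd l \<otimes>\<^bsub>G\<^esub> x) w \<one>\<^bsub>G\<^esub> \<and> (snd (hd W) \<in> B \<longleftrightarrow> fst (hd w))"
proof (induction w)
  case (Cons l rest)
  let ?A = "if fst l then B else {g}"
  have l: "snd l \<noteq> \<one>\<^bsub>G\<^esub>" "snd l \<in> generate G ?A" using Cons(4) by auto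
  have "?A \<subseteq> carrier G" using B by auto
  then obtain u where u: "u \<noteq> []" "reduced_word u" "snd ` set u \<subseteq> ?A" "word_val G u = snd l"
    using nontrivial_eq_reduced_word_val[OF G _ l(2,1)] by blast
  have u_in_B: "snd y \<in> B \<longleftrightarrow> fst l" if "y \<in> set u" for y
    using u(3) that B(3) by (auto split: if_splits)
  have uc: "snd ` set u \<subseteq> insert g B" using u(3) by (auto split: if_splits)
  have lc: "snd l \<in> carrier G" using u(4) word_val_closed[OF G] uc B
    by (metis insert_subset subset_trans)
  show ?case
  proof (cases "rest = []")
    case True
    then show ?thesis using u uc u_in_B[of "hd u"] lc G by (auto simp: group.is_monoid monoid.r_one)
  next
    case False
    then have alt: "alternating rest" "fst l \<noteq> fst (hd rest)" using Cons(3) by (cases rest; simp)+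
    obtain W where W: "W \<noteq> []" "reduced_word W" "snd ` set W \<subseteq> insert g B"
        "word_val G W = foldr (\<lambda>l x. snd l \<otimes>\<^bsub>G\<^esub> x) rest \<one>\<^bsub>G\<^esub>" "snd (hd W) \<in> B \<longleftrightarrow> fst (hd rest)"
      using Cons(1)[OF False alt(1)] Cons(4) by auto
    have "snd (last u) \<noteq> snd (hd W)" using u_in_B[of "last u"] u(1) W(5) alt(2) by auto
    then have "reduced_word (u @ W)" using reduced_word_append u(1,2) W(1,2) by blast
    moreover have "word_val G (u @ W) = snd l \<otimes>\<^bsub>G\<^esub> word_val G W"
      using word_val_append[OF G, of u W] uc W(3) B u(4) by auto
    ultimately show ?thesis using u(1) uc W u_in_B[of "hd u"] by (intro exI[of _ "u @ W"]) auto
  qed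
qed simp

lemma internal_free_product_of_free_basis:
  assumes G: "group G" and fb: "free_basis G (insert g B)" and g: "g \<notin> B"
  shows "internal_free_product G (generate G B) (generate G {g})"
  unfolding internal_free_product_def
proof (intro conjI allI impI)
  have B: "B \<subseteq> carrier G" "g \<in> carrier G" using fb by (auto simp: free_basis_def)
  then show "subgroup (generate G B) G" "subgroup (generate G {g}) G"
    by (auto intro: group.generate_is_subgroup[OF G])
  fix w :: "(bool \<times> 'a) list"
  assume "w \<noteq> [] \<and> alternating w \<and> (\<forall>l\<in>set w. snd l \<noteq> \<one>\<^bsub>G\<^esub> \<and>
    (if fst l then snd l \<in> generate G B else snd l \<in> generate G {g}))"
  then obtain W where "W \<noteq> []" "reduced_word W" "snd ` set W \<subseteq> insert g B"
      "word_val G W = foldr (\<lambda>l x. snd l \<otimes>\<^bsub>G\<^esub> x) w \<one>\<^bsub>G\<^esub>"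
    using alternating_product_reduced_word[OF G B g, of w] by (auto simp: if_distrib)
  then show "foldr (\<lambda>l x. snd l \<otimes>\<^bsub>G\<^esub> x) w \<one>\<^bsub>G\<^esub> \<noteq> \<one>\<^bsub>G\<^esub>"
    using fb unfolding free_basis_def by auto
qed

section \<open>Ranks of locally free groups\<close>

lemma mu_in_le_rank_lf: "fin_gen_subgroup G H \<Longrightarrow> H \<subseteq> M \<Longrightarrow> enat (mu_in G M H) \<le> rank_lf G M"
  unfolding rank_lf_def by (auto intro: Sup_upper)

lemma rank_lf_le:
  "(\<And>H. fin_gen_subgroup G H \<Longrightarrow> H \<subseteq> M \<Longrightarrow> mu_in G M H \<le> k) \<Longrightarrow> rank_lf G M \<le> enat k"
  unfolding rank_lf_def by (auto intro!: Sup_least)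

lemma mu_in_gt_if_rank_lf_gt:
  "enat m < rank_lf G M \<Longrightarrow> \<exists>H. fin_gen_subgroup G H \<and> H \<subseteq> M \<and> m < mu_in G M H"
  unfolding rank_lf_def less_Sup_iff by auto

lemma mu_in_le:
  "0 < k \<Longrightarrow> F \<subseteq> M \<Longrightarrow> free_subgroup_rank G F k \<Longrightarrow> H \<subseteq> F \<Longrightarrow> mu_in G M H \<le> k"
  unfolding mu_in_def by (rule Least_le) blast

lemma mu_in_attained:
  assumes "0 < k" "F \<subseteq> M" "free_subgroup_rank G F k" "H \<subseteq> F"
  shows "0 < mu_in G M H \<and> (\<exists>F. F \<subseteq> M \<and> free_subgroup_rank G F (mu_in G M H) \<and> H \<subseteq> F)"
  unfolding mu_in_def by (rule LeastI_ex) (use assms in blast)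

lemma rank_lf_free_subgroup_le:
  assumes "free_subgroup_rank G F k" "0 < k"
  shows "rank_lf G F \<le> enat k"
proof (rule rank_lf_le)
  fix H assume "H \<subseteq> F"
  then show "mu_in G F H \<le> k" by (rule mu_in_le[OF assms(2) subset_refl assms(1)])
qed

lemma locally_free_free_basis_generate:
  assumes lf: "locally_free G" and S: "finite S" "S \<subseteq> carrier G"
    and x: "x \<in> generate G S" "x \<noteq> \<one>\<^bsub>G\<^esub>"
  shows "\<exists>C. finite C \<and> free_basis G C \<and> generate G C = generate G S \<and> 0 < card C \<and> card C \<le> card S"
proof -
  have G: "group G" using lf by (simp add: locally_free_def)
  have "fin_gen_subgroup G (generate G S)" using S by (auto simp: fin_gen_subgroup_def)
  then obtain C where C: "finite C" "free_basis G C" "generate G C = generate G S"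
    using lf unfolding locally_free_def free_subgroup_rank_def by blast
  have "C \<noteq> {}" using C(3) x group.generate_empty[OF G] by auto
  then have "0 < card C" using C(1) by auto
  moreover have "card C \<le> card S" using free_basis_card_le_generators[OF G C(2,1) S C(3)] .
  ultimately show ?thesis using C by blast
qed

lemma fin_gen_subgroup_subset_generate_finite:
  assumes G: "group G" and H: "fin_gen_subgroup G H" "H \<subseteq> generate G A" and A: "A \<subseteq> carrier G"
  shows "\<exists>A0. finite A0 \<and> A0 \<subseteq> A \<and> H \<subseteq> generate G A0"
proof -
  obtain T where T: "finite T" "T \<subseteq> carrier G" "H = generate G T"
    using H(1) unfolding fin_gen_subgroup_def by blast
  have "T \<subseteq> generate G A" using T(3) H(2) by (auto intro: generate.incl)
  then have "\<forall>t\<in>T. \<exists>w. t = word_val G w \<and> snd ` set w \<subseteq> A"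
    using generate_eq_word_vals[OF G A] by auto
  from bchoice[OF this] obtain wt where wt: "\<forall>t\<in>T. t = word_val G (wt t) \<and> snd ` set (wt t) \<subseteq> A"
    by blast
  define A0 where "A0 = (\<Union>t\<in>T. snd ` set (wt t))"
  have A0: "finite A0" "A0 \<subseteq> A" using T(1) wt by (auto simp: A0_def)
  have "T \<subseteq> generate G A0"
  proof
    fix t assume t: "t \<in> T"
    then have "snd ` set (wt t) \<subseteq> A0" by (auto simp: A0_def)
    then show "t \<in> generate G A0"
      using generate_eq_word_vals[OF G, of A0] A0(2) A wt t by blast
  qed
  then have "H \<subseteq> generate G A0"
    unfolding T(3) using A0(2) A
    by (intro group.generate_subgroup_incl[OF G] group.generate_is_subgroup[OF G]) auto
  then show ?thesis using A0 by blast
qed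

text \<open>\<open>r(M) = m\<close> keeps the rank of a free subgroup of M enclosing a given finitely generated one
  at most m, and \<open>\<mu>\<^sub>G(D) = m\<close> keeps it at least m as soon as it contains D. The nontrivial
  element a makes the enclosed subgroup need a positive rank, the only ranks \<open>\<mu>\<close> considers.\<close>

lemma free_subgroup_rank_mu_enclosing:
  assumes lf: "locally_free G" and M: "subgroup M G" "a \<in> M" "a \<noteq> \<one>\<^bsub>G\<^esub>"
    and D: "fin_gen_subgroup G D" "D \<subseteq> M" "mu_in G (carrier G) D = m"
    and rank: "rank_lf G M = enat m" and S: "finite S" "S \<subseteq> M"
  shows "\<exists>B. finite B \<and> card B = m \<and> free_basis G B \<and> generate G B \<subseteq> M \<and>
    D \<subseteq> generate G B \<and> S \<subseteq> generate G B"
proof -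
  have G: "group G" using lf by (simp add: locally_free_def)
  have Mc: "M \<subseteq> carrier G" using M(1) by (rule subgroup.subset)
  obtain D0 where D0: "finite D0" "D0 \<subseteq> carrier G" "D = generate G D0"
    using D(1) unfolding fin_gen_subgroup_def by blast
  have D0M: "D0 \<subseteq> M" using D(2) D0(3) by (auto intro: generate.incl)
  define K where "K = generate G (S \<union> D0 \<union> {a})"
  have KS: "S \<union> D0 \<union> {a} \<subseteq> carrier G" using S(2) D0(2) M(2) Mc by auto
  have KM: "K \<subseteq> M" unfolding K_def
    by (rule group.generate_subgroup_incl[OF G _ M(1)]) (use S(2) D0M M(2) in auto)
  have fin: "finite (S \<union> D0 \<union> {a})" using S(1) D0(1) by simp
  then have Kfg: "fin_gen_subgroup G K"
    unfolding fin_gen_subgroup_def K_def using KS by (intro exI[of _ "S \<union> D0 \<union> {a}"]) simp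
  have "a \<in> K" unfolding K_def by (auto intro: generate.incl)
  then obtain C where C: "finite C" "free_basis G C" "generate G C = K" "0 < card C"
    using locally_free_free_basis_generate[OF lf fin KS _ M(3)] unfolding K_def by blast
  then have "free_subgroup_rank G K (card C)" unfolding free_subgroup_rank_def
    by (intro exI[of _ C]) simp
  then obtain F where F: "F \<subseteq> M" "free_subgroup_rank G F (mu_in G M K)" "K \<subseteq> F" "0 < mu_in G M K"
    using mu_in_attained[OF C(4) KM _ subset_refl] by blast
  have "mu_in G M K \<le> m" using mu_in_le_rank_lf[OF Kfg KM] rank by simp
  moreover have "D \<subseteq> K" unfolding D0(3) K_def using group.mono_generate[OF G] by blast
  then have "m \<le> mu_in G M K" using mu_in_le[OF F(4) _ F(2), of "carrier G" D] F(1,3) Mc D(3)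
    by auto
  ultimately obtain B where B: "finite B" "card B = m" "free_basis G B" "generate G B = F"
    using F(2) unfolding free_subgroup_rank_def by auto
  have "S \<subseteq> K" unfolding K_def by (auto intro: generate.incl)
  then show ?thesis using B F(1,3) \<open>D \<subseteq> K\<close> by blast
qed

lemma mu_in_generate_insert_le:
  assumes lf: "locally_free G" and M: "subgroup M G" "a \<in> M" "a \<noteq> \<one>\<^bsub>G\<^esub>"
    and D: "fin_gen_subgroup G D" "D \<subseteq> M" "mu_in G (carrier G) D = m"
    and rank: "rank_lf G M = enat m" and g: "g \<in> carrier G - M"
    and H: "fin_gen_subgroup G H" "H \<subseteq> generate G (M \<union> {g})"
  shows "\<exists>B C. finite B \<and> card B = m \<and> free_basis G B \<and> generate G B \<subseteq> M \<and> D \<subseteq> generate G B \<and>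
    finite C \<and> free_basis G C \<and> generate G C = generate G (insert g B) \<and>
    mu_in G (generate G (M \<union> {g})) H \<le> card C \<and> card C \<le> card (insert g B)"
proof -
  have G: "group G" using lf by (simp add: locally_free_def)
  have Mc: "M \<subseteq> carrier G" using M(1) by (rule subgroup.subset)
  have Mg: "M \<union> {g} \<subseteq> carrier G" using Mc g by auto
  obtain A0 where A0: "finite A0" "A0 \<subseteq> M \<union> {g}" "H \<subseteq> generate G A0"
    using fin_gen_subgroup_subset_generate_finite[OF G H Mg] by blast
  have "finite (A0 \<inter> M)" "A0 \<inter> M \<subseteq> M" using A0(1) by auto
  from free_subgroup_rank_mu_enclosing[OF lf M D rank this] obtain B
    where B: "finite B" "card B = m" "free_basis G B" "generate G B \<subseteq> M"
      "D \<subseteq> generate G B" "A0 \<inter> M \<subseteq> generate G B"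
    by blast
  have Bc: "insert g B \<subseteq> carrier G" using B(3) g by (auto simp: free_basis_def)
  have "finite (insert g B)" "g \<in> generate G (insert g B)" "g \<noteq> \<one>\<^bsub>G\<^esub>"
    using B(1) g subgroup.one_closed[OF M(1)] by (auto intro: generate.incl)
  from locally_free_free_basis_generate[OF lf this(1) Bc this(2,3)] obtain C
    where C: "finite C" "free_basis G C" "generate G C = generate G (insert g B)"
      "0 < card C" "card C \<le> card (insert g B)"
    by blast
  have "generate G B \<subseteq> generate G (insert g B)" using group.mono_generate[OF G] by blast
  then have "A0 \<subseteq> generate G (insert g B)" using A0(2) B(6) by (auto intro: generate.incl)
  then have "H \<subseteq> generate G (insert g B)"
    using A0(3) group.generate_subgroup_incl[OF G _ group.generate_is_subgroup[OF G Bc]] by blast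
  moreover have "generate G (insert g B) \<subseteq> generate G (M \<union> {g})"
    using B(4) by (intro group.generate_subgroup_incl[OF G _ group.generate_is_subgroup[OF G Mg]])
      (auto intro: generate.incl)
  moreover have "free_subgroup_rank G (generate G (insert g B)) (card C)"
    unfolding free_subgroup_rank_def using C by (intro exI[of _ C]) simp
  ultimately have "mu_in G (generate G (M \<union> {g})) H \<le> card C" by (intro mu_in_le[OF C(4)])
  then show ?thesis using B C by blast
qed

lemma rank_lf_generate_insert_le:
  assumes lf: "locally_free G" and M: "subgroup M G" "a \<in> M" "a \<noteq> \<one>\<^bsub>G\<^esub>"
    and D: "fin_gen_subgroup G D" "D \<subseteq> M" "mu_in G (carrier G) D = m"
    and rank: "rank_lf G M = enat m" and g: "g \<in> carrier G - M"
  shows "rank_lf G (generate G (M \<union> {g})) \<le> enat (m + 1)"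
proof (rule rank_lf_le)
  fix H assume "fin_gen_subgroup G H" "H \<subseteq> generate G (M \<union> {g})"
  from mu_in_generate_insert_le[OF lf M D rank g this] obtain B C :: "'a set"
    where "finite B" "card B = m" "mu_in G (generate G (M \<union> {g})) H \<le> card C"
      "card C \<le> card (insert g B)"
    by blast
  moreover have "card (insert g B) \<le> card B + 1" using \<open>finite B\<close> by (simp add: card_insert_if)
  ultimately show "mu_in G (generate G (M \<union> {g})) H \<le> m + 1" by linarith
qed

lemma nontrivial_if_rank_lf_generate_insert_gt:
  assumes lf: "locally_free G" and M: "subgroup M G" and D: "D \<subseteq> M" "mu_in G (carrier G) D = m"
    and g: "g \<in> carrier G - M" and gt: "enat m < rank_lf G (generate G (M \<union> {g}))"
  shows "\<exists>a\<in>M. a \<noteq> \<one>\<^bsub>G\<^esub>"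
proof (rule ccontr)
  assume trivial: "\<not> (\<exists>a\<in>M. a \<noteq> \<one>\<^bsub>G\<^esub>)"
  have G: "group G" using lf by (simp add: locally_free_def)
  have one: "\<one>\<^bsub>G\<^esub> \<in> M" by (rule subgroup.one_closed[OF M])
  have gc: "{g} \<subseteq> carrier G" "g \<noteq> \<one>\<^bsub>G\<^esub>" using g one by auto
  have "M \<union> {g} \<subseteq> generate G {g}" using trivial by (auto intro: generate.one generate.incl)
  then have "generate G (M \<union> {g}) \<subseteq> generate G {g}"
    by (rule group.generate_subgroup_incl[OF G _ group.generate_is_subgroup[OF G gc(1)]])
  moreover have "generate G {g} \<subseteq> generate G (M \<union> {g})" by (rule group.mono_generate[OF G]) simp
  ultimately have cyclic: "generate G (M \<union> {g}) = generate G {g}" by (rule antisym)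
  have "finite {g}" "g \<in> generate G {g}" by (auto intro: generate.incl)
  from locally_free_free_basis_generate[OF lf this(1) gc(1) this(2) gc(2)] obtain C
    where C: "finite C" "free_basis G C" "generate G C = generate G {g}"
      "0 < card C" "card C \<le> card {g}"
    by blast
  have rank1: "free_subgroup_rank G (generate G {g}) 1"
    unfolding free_subgroup_rank_def using C by (intro exI[of _ C]) simp
  have "D \<subseteq> {\<one>\<^bsub>G\<^esub>}" using D(1) trivial by auto
  then have Dg: "D \<subseteq> generate G {g}" using generate.one[of G "{g}"] by auto
  have "generate G {g} \<subseteq> carrier G" using group.generate_in_carrier[OF G gc(1)] by blast
  from mu_in_attained[OF zero_less_one this rank1 Dg] have "0 < m" using D(2) by simp
  moreover have "rank_lf G (generate G (M \<union> {g})) \<le> enat 1"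
    unfolding cyclic by (rule rank_lf_free_subgroup_le[OF rank1 zero_less_one])
  with gt have "enat m < enat 1" by (rule less_le_trans)
  ultimately show False by simp
qed

lemma internal_free_product_if_mu_in_gt:
  assumes lf: "locally_free G" and M: "subgroup M G" "a \<in> M" "a \<noteq> \<one>\<^bsub>G\<^esub>"
    and D: "fin_gen_subgroup G D" "D \<subseteq> M" "mu_in G (carrier G) D = m"
    and rank: "rank_lf G M = enat m" and g: "g \<in> carrier G - M"
    and H: "fin_gen_subgroup G H" "H \<subseteq> generate G (M \<union> {g})"
      "m < mu_in G (generate G (M \<union> {g})) H"
  shows "\<exists>F. F \<subseteq> M \<and> free_subgroup_rank G F m \<and> D \<subseteq> F \<and> internal_free_product G F (generate G {g})"
proof -
  have G: "group G" using lf by (simp add: locally_free_def)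
  from mu_in_generate_insert_le[OF lf M D rank g H(1,2)]
  obtain B C where B: "finite B" "card B = m" "free_basis G B" "generate G B \<subseteq> M"
      "D \<subseteq> generate G B"
    and C: "finite C" "free_basis G C" "generate G C = generate G (insert g B)"
      "mu_in G (generate G (M \<union> {g})) H \<le> card C" "card C \<le> card (insert g B)"
    by blast
  have "g \<notin> B" using B(4) g by (auto intro: generate.incl)
  then have card: "card C = card (insert g B)" using B(1,2) C(4,5) H(3) by simp
  have gB: "finite (insert g B)" "insert g B \<subseteq> carrier G"
    using B(1,3) g by (auto simp: free_basis_def)
  have "free_basis G (insert g B)" by (rule free_basis_of_card_eq[OF G C(2,1) gB C(3) card])
  then have "internal_free_product G (generate G B) (generate G {g})"
    by (rule internal_free_product_of_free_basis[OF G _ \<open>g \<notin> B\<close>])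
  moreover have "free_subgroup_rank G (generate G B) m"
    unfolding free_subgroup_rank_def using B by (intro exI[of _ B]) simp
  ultimately show ?thesis using B(4,5) by (intro exI[of _ "generate G B"]) simp
qed

theorem lemma2p1:
  fixes G :: "('a, 'b) monoid_scheme" and D M :: "'a set" and g :: 'a and m :: nat
  assumes "locally_free G"
    and "fin_gen_subgroup G D"
    and "mu_in G (carrier G) D = m"
    and "subgroup M G"
    and "D \<subseteq> M"
    and "rank_lf G M = enat m"
    and "g \<in> carrier G - M"
    and "rank_lf G (generate G (M \<union> {g})) > enat m"
  shows "rank_lf G (generate G (M \<union> {g})) = enat (m + 1) \<and>
         (\<exists>F. F \<subseteq> M \<and> free_subgroup_rank G F m \<and> D \<subseteq> F \<and>
              internal_free_product G F (generate G {g}))"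
proof -
  obtain a where a: "a \<in> M" "a \<noteq> \<one>\<^bsub>G\<^esub>"
    using nontrivial_if_rank_lf_generate_insert_gt[OF assms(1,4,5,3,7,8)] by blast
  have "enat (m + 1) \<le> rank_lf G (generate G (M \<union> {g}))"
    using ileI1[OF assms(8)] by (simp add: eSuc_enat)
  with rank_lf_generate_insert_le[OF assms(1,4) a assms(2,5,3,6,7)]
  have "rank_lf G (generate G (M \<union> {g})) = enat (m + 1)" by (rule antisym)
  moreover from mu_in_gt_if_rank_lf_gt[OF assms(8)] obtain H where H: "fin_gen_subgroup G H"
    "H \<subseteq> generate G (M \<union> {g})" "m < mu_in G (generate G (M \<union> {g})) H"
    by blast
  then have "\<exists>F. F \<subseteq> M \<and> free_subgroup_rank G F m \<and> D \<subseteq> F \<and>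
      internal_free_product G F (generate G {g})"
    by (rule internal_free_product_if_mu_in_gt[OF assms(1,4) a assms(2,5,3,6,7)])
  ultimately show ?thesis ..
qed

end
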